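(* Let $K$ be a field of characteristic $p>0$ such that $K/K^{p^\infty}$ is a finitely generated field extension, where $K^{p^\infty}=\bigcap_{n\ge0}K^{p^n}$. Let $W_1$ be a subfield with $K^p\subseteq W_1\subsetneq K$. Then there exists a subfield $W_2\subseteq W_1$ such that $K,W_1,W_2$ is a $2$-foliation on $K$, i.e. $K^{p^2}\subseteq W_2$, $W_2\cdot K^p=W_1$, and $\dim_{W_2}(W_1)=\dim_{W_1}(K)$.
   Context: $\cdot$ denotes the compositum of subfields inside $K$. *)

theory Defs
  imports "HOL-Algebra.Algebra"
begin

definition ring_char :: "('a, 'b) ring_scheme \<Rightarrow> nat" where
  "ring_char R = (if \<exists>n::nat. n > 0 \<and> add_pow R n \<one>\<^bsub>R\<^esub> = \<zero>\<^bsub>R\<^esub>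
                  then (LEAST n::nat. n > 0 \<and> add_pow R n \<one>\<^bsub>R\<^esub> = \<zero>\<^bsub>R\<^esub>) else 0)"

definition frob_image :: "('a, 'b) ring_scheme \<Rightarrow> nat \<Rightarrow> 'a set" where
  "frob_image R q = (\<lambda>x. x [^]\<^bsub>R\<^esub> q) ` carrier R"

definition perfect_core :: "('a, 'b) ring_scheme \<Rightarrow> nat \<Rightarrow> 'a set" where
  "perfect_core R p = (\<Inter>n. frob_image R (p ^ n))"

definition compositum :: "('a, 'b) ring_scheme \<Rightarrow> 'a set \<Rightarrow> 'a set \<Rightarrow> 'a set" where
  "compositum R A B = generate_field R (A \<union> B)"

definition fin_gen_ext :: "('a, 'b) ring_scheme \<Rightarrow> 'a set \<Rightarrow> bool" where
  "fin_gen_ext R F \<longleftrightarrow> (\<exists>S. finite S \<and> S \<subseteq> carrier R \<and> generate_field R (F \<union> S) = carrier R)"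

end

(*
  Let C = K^p and A = W1^p.  Every element of K is a p-th root of an element of C, so the
  finitely many generators of K over K^(p^oo) are algebraic over C and K is finite over C;
  hence so is W1, and W1 = C(z_1, ..., z_r) for a p-basis: each z_i lies outside the field
  generated over C by the later ones.  Each adjunction has degree p, because the minimal
  polynomial of a p-th root z of an element of F with z not in F divides (X - z)^p, hence is
  (X - z)^k, and its constant term forces k = p.  So [W1 : C] = p^r.

  Put W2 = A(z_1, ..., z_r).  Since z_i^p lies in A, a subfield of C, the z_i stay p-independent
  over A, so [W2 : A] = p^r = [W1 : C], and comparing the towers A, C, W1 and A, W2, W1 gives
  [W1 : W2] = [C : A] = [K : W1], the last equality because the Frobenius maps W1 in K
  isomorphically onto A in C.  Finally W2 C = C(z_1, ..., z_r) = W1 and K^(p^2) = (K^p)^p is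
  contained in W1^p = A, which lies in W2.
*)

theory Submission
  imports Defs "HOL-Computational_Algebra.Primes"
begin

section \<open>Characteristic p and the Frobenius endomorphism\<close>

lemma (in cring) binomial_term_Suc:
  assumes a: "a \<in> carrier R" and b: "b \<in> carrier R"
  shows "add_pow R (Suc n choose Suc k) (a [^] Suc k \<otimes> b [^] (Suc n - Suc k))
    = a \<otimes> add_pow R (n choose k) (a [^] k \<otimes> b [^] (n - k))
      \<oplus> b \<otimes> add_pow R (n choose Suc k) (a [^] Suc k \<otimes> b [^] (n - Suc k))"
proof (cases "k < n")
  case True
  define x where "x = a [^] Suc k \<otimes> b [^] (n - k)"
  have x_closed: "x \<in> carrier R"
    unfolding x_def using a b by simp
  have "x = a \<otimes> (a [^] k \<otimes> b [^] (n - k))"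
    unfolding x_def using a b by (simp add: m_ac)
  moreover have "x = b \<otimes> (a [^] Suc k \<otimes> b [^] (n - Suc k))"
    unfolding x_def using a b True
    by (metis Suc_diff_Suc m_lcomm nat_pow_Suc2 nat_pow_closed)
  moreover have "add_pow R (Suc n choose Suc k) x = add_pow R (n choose k) x \<oplus> add_pow R (n choose Suc k) x"
    using add.nat_pow_mult[OF x_closed] by simp
  ultimately show ?thesis
    using a b by (simp add: add_pow_rdistr x_def)
qed (use a b in \<open>auto simp: add_pow_rdistr binomial_eq_0 m_ac\<close>)

lemma (in cring) binomial_finsum:
  assumes a: "a \<in> carrier R" and b: "b \<in> carrier R"
  shows "(a \<oplus> b) [^] n = (\<Oplus>k\<in>{..n}. add_pow R (n choose k) (a [^] k \<otimes> b [^] (n - k)))"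
proof (induction n)
  case 0
  show ?case
    using a b by simp
next
  case (Suc n)
  define t where "t m k = add_pow R (m choose k) (a [^] k \<otimes> b [^] (m - k))" for m k
  have t_carrier: "t m k \<in> carrier R" for m k
    unfolding t_def using a b by simp
  then have t_closed: "t m \<in> A \<rightarrow> carrier R" for m A
    by simp
  have pascal: "t (Suc n) (Suc k) = a \<otimes> t n k \<oplus> b \<otimes> t n (Suc k)" for k
    unfolding t_def by (rule binomial_term_Suc[OF a b])
  have pascal_zero: "t (Suc n) 0 = b \<otimes> t n 0"
    using b by (simp add: t_def m_comm)
  have "t n (Suc n) = \<zero>"
    by (simp add: t_def binomial_eq_0)
  then have shift: "(\<Oplus>k\<in>{..n}. t n k) = (\<Oplus>k\<in>{..n}. t n (Suc k)) \<oplus> t n 0"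
    using t_closed finsum_Suc2[OF t_closed, of n n] by simp
  have "(a \<oplus> b) [^] Suc n = a \<otimes> (\<Oplus>k\<in>{..n}. t n k) \<oplus> b \<otimes> (\<Oplus>k\<in>{..n}. t n k)"
    using Suc a b t_closed by (simp add: t_def l_distr m_comm)
  also have "b \<otimes> (\<Oplus>k\<in>{..n}. t n k) = b \<otimes> ((\<Oplus>k\<in>{..n}. t n (Suc k)) \<oplus> t n 0)"
    by (simp only: shift)
  also have "a \<otimes> (\<Oplus>k\<in>{..n}. t n k) \<oplus> b \<otimes> ((\<Oplus>k\<in>{..n}. t n (Suc k)) \<oplus> t n 0)
      = (\<Oplus>k\<in>{..n}. a \<otimes> t n k \<oplus> b \<otimes> t n (Suc k)) \<oplus> b \<otimes> t n 0"
    using a b t_carrier by (simp add: Pi_def finsum_addf finsum_rdistr r_distr a_assoc)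
  also have "\<dots> = (\<Oplus>k\<in>{..n}. t (Suc n) (Suc k)) \<oplus> t (Suc n) 0"
    by (simp only: pascal pascal_zero)
  also have "\<dots> = (\<Oplus>k\<in>{..Suc n}. t (Suc n) k)"
    by (rule finsum_Suc2[OF t_closed, symmetric])
  finally show ?case
    by (simp add: t_def)
qed

lemma (in ring) add_pow_eq_zero_of_char:
  assumes "add_pow R (p::nat) \<one> = \<zero>" and "x \<in> carrier R"
  shows "add_pow R (p * m) x = \<zero>"
proof -
  have "add_pow R p x = \<zero>"
    using add_pow_ldistr[of \<one> x p] assms by simp
  then show ?thesis
    using add.nat_pow_pow[OF assms(2), of m p] by simp
qed

lemma (in cring) freshman_dream:
  assumes p: "Factorial_Ring.prime (p::nat)" and char: "add_pow R p \<one> = \<zero>"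
    and a: "a \<in> carrier R" and b: "b \<in> carrier R"
  shows "(a \<oplus> b) [^] p = a [^] p \<oplus> b [^] p"
proof -
  define t where "t k = add_pow R (p choose k) (a [^] k \<otimes> b [^] (p - k))" for k
  have t_closed: "t \<in> A \<rightarrow> carrier R" for A
    unfolding t_def using a b by simp
  have middle_terms: "t k = \<zero>" if "k \<in> {..p} - {0, p}" for k
  proof -
    have "p dvd (p choose k)"
      using that p by (intro dvd_choose_prime) auto
    then obtain m where "p choose k = p * m" ..
    then show ?thesis
      unfolding t_def using add_pow_eq_zero_of_char[OF char] a b by simp
  qed
  have "p \<noteq> 0"
    using p by auto
  have "(a \<oplus> b) [^] p = (\<Oplus>k\<in>{..p}. t k)"
    unfolding t_def by (rule binomial_finsum[OF a b])
  also have "\<dots> = (\<Oplus>k\<in>{0, p}. t k)"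
    using middle_terms t_closed by (intro add.finprod_mono_neutral_cong_right) auto
  also have "\<dots> = b [^] p \<oplus> a [^] p"
    using \<open>p \<noteq> 0\<close> t_closed a b by (simp add: t_def)
  finally show ?thesis
    using a b by (simp add: a_comm)
qed

lemma (in cring) freshman_dream_minus:
  assumes p: "Factorial_Ring.prime (p::nat)" and char: "add_pow R p \<one> = \<zero>"
    and a: "a \<in> carrier R" and b: "b \<in> carrier R"
  shows "(a \<ominus> b) [^] p = a [^] p \<ominus> b [^] p"
proof -
  have "a \<ominus> b \<oplus> b = a"
    using a b by (simp add: minus_eq a_assoc l_neg)
  then have sum: "(a \<ominus> b) [^] p \<oplus> b [^] p = a [^] p"
    using freshman_dream[OF p char, of "a \<ominus> b" b] a b by simp
  have "(a \<ominus> b) [^] p = ((a \<ominus> b) [^] p \<oplus> b [^] p) \<ominus> b [^] p"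
    using a b by (simp add: minus_eq a_assoc r_neg)
  then show ?thesis
    by (simp only: sum)
qed

lemma ring_char_posD:
  fixes R :: "('a, 'b) ring_scheme" (structure)
  assumes "ring_char R = p" and "p > 0"
  shows "add_pow R p \<one> = \<zero>" and "\<And>m. 0 < m \<Longrightarrow> m < p \<Longrightarrow> add_pow R m \<one> \<noteq> \<zero>"
proof -
  let ?P = "\<lambda>n::nat. 0 < n \<and> add_pow R n \<one> = \<zero>"
  have "\<exists>n. ?P n"
    using assms unfolding ring_char_def by (metis less_irrefl)
  then have p_Least: "p = (LEAST n. ?P n)"
    using assms(1) unfolding ring_char_def by simp
  show "add_pow R p \<one> = \<zero>"
    using LeastI_ex[OF \<open>\<exists>n. ?P n\<close>] unfolding p_Least by simp
  show "\<And>m. 0 < m \<Longrightarrow> m < p \<Longrightarrow> add_pow R m \<one> \<noteq> \<zero>"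
    using not_less_Least unfolding p_Least by blast
qed

lemma (in domain) prime_ring_char:
  assumes "ring_char R = p" and "p > 0"
  shows "Factorial_Ring.prime p"
proof -
  note char = ring_char_posD[OF assms]
  have "p \<noteq> 1"
    using char(1) by auto
  then have "1 < p"
    using assms(2) by linarith
  moreover have "m = 1 \<or> m = p" if "m dvd p" for m
  proof (rule ccontr)
    assume "\<not> (m = 1 \<or> m = p)"
    obtain k where k: "p = m * k"
      using \<open>m dvd p\<close> ..
    have "0 < m" "0 < k"
      using k assms(2) by auto
    moreover have "m \<noteq> p" "k \<noteq> p"
      using k \<open>\<not> (m = 1 \<or> m = p)\<close> assms(2) by auto
    ultimately have "m < p" "k < p"
      using k by (metis dvd_imp_le dvd_triv_left dvd_triv_right assms(2) le_neq_implies_less)+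
    have "add_pow R m \<one> \<otimes> add_pow R k \<one> = add_pow R p \<one>"
      unfolding k using add_pow_ldistr[of \<one> "add_pow R k \<one>" m] add.nat_pow_pow[of \<one> m k]
      by (simp add: mult.commute)
    then have "add_pow R m \<one> = \<zero> \<or> add_pow R k \<one> = \<zero>"
      using char(1) integral by simp
    then show False
      using char(2) \<open>0 < m\<close> \<open>m < p\<close> \<open>0 < k\<close> \<open>k < p\<close> by blast
  qed
  ultimately show ?thesis
    by (simp add: prime_nat_iff)
qed

lemma (in ring_hom_ring) hom_add_pow:
  "x \<in> carrier R \<Longrightarrow> h (add_pow R (n::nat) x) = add_pow S n (h x)"
  using group_hom.hom_nat_pow[OF a_group_hom] by (simp add: add_pow_def)

lemma (in ring) frob_image_mult_subset:
  assumes "frob_image R p \<subseteq> W"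
  shows "frob_image R (p * q) \<subseteq> (\<lambda>x. x [^] q) ` W"
proof
  fix y
  assume "y \<in> frob_image R (p * q)"
  then obtain x where "x \<in> carrier R" "y = (x [^] p) [^] q"
    unfolding frob_image_def by (auto simp: nat_pow_pow)
  moreover have "x [^] p \<in> W"
    using assms \<open>x \<in> carrier R\<close> unfolding frob_image_def by auto
  ultimately show "y \<in> (\<lambda>x. x [^] q) ` W"
    by blast
qed

locale char_p_field = field R for R (structure) +
  fixes p :: nat
  assumes prime_p: "Factorial_Ring.prime p"
    and char_p: "add_pow R p \<one> = \<zero>"
begin

lemma p_gt_1: "1 < p"
  using prime_p prime_gt_1_nat by blast

lemma frobenius_uminus:
  "x \<in> carrier R \<Longrightarrow> (\<ominus> x) [^] p = \<ominus> (x [^] p)"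
  using freshman_dream_minus[OF prime_p char_p, of \<zero> x] p_gt_1 by (simp add: minus_eq nat_pow_zero)

lemma frobenius_ring_hom: "ring_hom_ring R R (\<lambda>x. x [^] p)"
proof (intro ring_hom_ringI2 ring_hom_memI)
  fix x y
  assume "x \<in> carrier R" "y \<in> carrier R"
  then show "(x \<otimes> y) [^] p = x [^] p \<otimes> y [^] p" "(x \<oplus> y) [^] p = x [^] p \<oplus> y [^] p"
    using freshman_dream[OF prime_p char_p] by (simp_all add: nat_pow_distrib)
qed (simp_all add: ring_axioms)

lemma frobenius_inj_on: "inj_on (\<lambda>x. x [^] p) (carrier R)"
  using ring_hom_ring.img_is_subfield(1)[OF frobenius_ring_hom carrier_is_subfield] by simp

lemma subfield_frobenius_image:
  "subfield K R \<Longrightarrow> subfield ((\<lambda>x. x [^] p) ` K) R"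
  using ring_hom_ring.img_is_subfield(2)[OF frobenius_ring_hom] by simp

lemma subfield_frob_image: "subfield (frob_image R p) R"
  unfolding frob_image_def by (rule subfield_frobenius_image[OF carrier_is_subfield])

lemma dimension_frobenius_image:
  assumes "subfield K R" and "dimension n K E"
  shows "dimension n ((\<lambda>x. x [^] p) ` K) ((\<lambda>x. x [^] p) ` E)"
  using ring_hom_ring.inj_hom_dimension[OF frobenius_ring_hom assms(1) one_not_zero _ assms(2)]
    inj_on_subset[OF frobenius_inj_on space_subgroup_props(1)[OF assms]] by blast

end

section \<open>Adjoining a p-th root\<close>

lemma (in ring) subring_nat_pow_closed:
  assumes "subring F R" and "x \<in> F"
  shows "x [^] (n::nat) \<in> F"
  using assms(2) by (induction n) (auto intro: subringE(3,6)[OF assms(1)])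

lemma (in domain) nat_pow_nonzero:
  "a \<in> carrier R \<Longrightarrow> a \<noteq> \<zero> \<Longrightarrow> a [^] (n::nat) \<noteq> \<zero>"
  by (induction n) (auto simp: integral_iff)

lemma (in field) mem_subfield_of_coprime_pows:
  assumes F: "subfield F R" and x: "x \<in> carrier R"
    and "x [^] k \<in> F" "x [^] m \<in> F" and "coprime k m" and "0 < (k::nat)"
  shows "x \<in> F"
proof (cases "x = \<zero>")
  case True
  then show ?thesis
    using subringE(2)[OF subfieldE(1)[OF F]] by simp
next
  case False
  obtain a b where "k * a = m * b + 1"
    using bezout_nat[of k m] \<open>0 < k\<close> \<open>coprime k m\<close> by auto
  then have "(x [^] k) [^] a = (x [^] m) [^] b \<otimes> x"
    using x by (simp add: nat_pow_pow nat_pow_mult[symmetric])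
  moreover have y: "(x [^] m) [^] b \<in> F" "(x [^] k) [^] a \<in> F"
    using subring_nat_pow_closed[OF subfieldE(1)[OF F]] \<open>x [^] k \<in> F\<close> \<open>x [^] m \<in> F\<close>
    by auto
  moreover have "(x [^] m) [^] b \<in> Units R"
    using x False by (simp add: field_Units nat_pow_nonzero)
  ultimately have "x = inv ((x [^] m) [^] b) \<otimes> (x [^] k) [^] a"
    using x by (simp add: m_assoc[symmetric] Units_l_inv)
  moreover have "inv ((x [^] m) [^] b) \<in> F"
    using subfield_m_inv(1)[OF F] y \<open>(x [^] m) [^] b \<in> Units R\<close> by (simp add: field_Units)
  ultimately show ?thesis
    using y(2) subringE(6)[OF subfieldE(1)[OF F]] by metis
qed

lemma (in domain) lead_coeff_pow:
  assumes "q \<in> carrier (poly_ring R)" and "q \<noteq> []"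
  shows "lead_coeff (q [^]\<^bsub>poly_ring R\<^esub> (n::nat)) = lead_coeff q [^] n"
proof (induction n)
  case 0
  show ?case
    by (simp add: univ_poly_one)
next
  case (Suc n)
  interpret UP: domain "poly_ring R"
    by (rule univ_poly_is_domain[OF carrier_is_subring])
  have "q [^]\<^bsub>poly_ring R\<^esub> n \<in> carrier (poly_ring R)" "q [^]\<^bsub>poly_ring R\<^esub> n \<noteq> []"
    using assms polynomial_pow_not_zero by auto
  then have "lead_coeff (poly_mult (q [^]\<^bsub>poly_ring R\<^esub> n) q) = lead_coeff q [^] n \<otimes> lead_coeff q"
    using poly_mult_lead_coeff[OF carrier_is_subring] assms Suc
    by (metis univ_poly_carrier)
  then show ?case
    by (simp add: univ_poly_mult)
qed

lemma (in domain) divides_mult_lcancel: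
  assumes "a \<noteq> \<zero>" and "a \<in> carrier R" "b \<in> carrier R" "c \<in> carrier R"
    and "a \<otimes> b divides a \<otimes> c"
  shows "b divides c"
proof -
  obtain d where "d \<in> carrier R" "a \<otimes> c = a \<otimes> (b \<otimes> d)"
    using assms(5) assms(2,3) by (auto elim: dividesE simp: m_assoc)
  then show ?thesis
    using m_lcancel[OF assms(1,2)] assms(3,4) by (auto intro: dividesI)
qed

lemma (in field) pdivides_pirreducible_pow_imp_unit:
  assumes q: "q \<in> carrier (poly_ring R)" "pirreducible (carrier R) q"
    and g: "g \<in> carrier (poly_ring R)" "g pdivides q [^]\<^bsub>poly_ring R\<^esub> (n::nat)"
    and "\<not> q pdivides g"
  shows "g \<in> Units (poly_ring R)"
proof -
  interpret UP: principal_domain "poly_ring R"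
    by (rule univ_poly_is_principal[OF carrier_is_subfield])
  have "q [^]\<^bsub>poly_ring R\<^esub> n \<noteq> \<zero>\<^bsub>poly_ring R\<^esub>"
    using polynomial_pow_not_zero[OF q(1)] pirreducibleE(1)[OF carrier_is_subring q]
    by (simp add: univ_poly_zero)
  obtain b where b: "b \<in> carrier (poly_ring R)" "q [^]\<^bsub>poly_ring R\<^esub> n = g \<otimes>\<^bsub>poly_ring R\<^esub> b"
    using g(2) unfolding pdivides_def by (auto elim: dividesE)
  then have "q [^]\<^bsub>poly_ring R\<^esub> n pdivides b"
    using pirreducible_pow_pdivides_iff[OF carrier_is_subfield q(1) g(1) b(1) q(2) \<open>\<not> q pdivides g\<close>]
    unfolding pdivides_def by (metis UP.divides_refl UP.nat_pow_closed q(1))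
  then obtain c where c: "c \<in> carrier (poly_ring R)" "b = q [^]\<^bsub>poly_ring R\<^esub> n \<otimes>\<^bsub>poly_ring R\<^esub> c"
    unfolding pdivides_def by (auto elim: dividesE)
  have "q [^]\<^bsub>poly_ring R\<^esub> n \<otimes>\<^bsub>poly_ring R\<^esub> (g \<otimes>\<^bsub>poly_ring R\<^esub> c) = g \<otimes>\<^bsub>poly_ring R\<^esub> b"
    using c q(1) g(1) by (simp add: UP.m_lcomm)
  also have "\<dots> = q [^]\<^bsub>poly_ring R\<^esub> n \<otimes>\<^bsub>poly_ring R\<^esub> \<one>\<^bsub>poly_ring R\<^esub>"
    using b q(1) g(1) by simp
  finally have "q [^]\<^bsub>poly_ring R\<^esub> n \<otimes>\<^bsub>poly_ring R\<^esub> (g \<otimes>\<^bsub>poly_ring R\<^esub> c)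
      = q [^]\<^bsub>poly_ring R\<^esub> n \<otimes>\<^bsub>poly_ring R\<^esub> \<one>\<^bsub>poly_ring R\<^esub>" .
  then have "g \<otimes>\<^bsub>poly_ring R\<^esub> c = \<one>\<^bsub>poly_ring R\<^esub>"
    using UP.m_lcancel[OF \<open>q [^]\<^bsub>poly_ring R\<^esub> n \<noteq> \<zero>\<^bsub>poly_ring R\<^esub>\<close> UP.nat_pow_closed[OF q(1)]
        UP.m_closed[OF g(1) c(1)] UP.one_closed] by blast
  then show ?thesis
    using c(1) g(1) UP.m_comm[of g c] unfolding Units_def by auto
qed

lemma (in field) pdivides_pirreducible_pow:
  assumes q: "q \<in> carrier (poly_ring R)" "pirreducible (carrier R) q"
  shows "g \<in> carrier (poly_ring R) \<Longrightarrow> g pdivides q [^]\<^bsub>poly_ring R\<^esub> (n::nat) \<Longrightarrow>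
    \<exists>k\<le>n. \<exists>u\<in>Units (poly_ring R). g = q [^]\<^bsub>poly_ring R\<^esub> k \<otimes>\<^bsub>poly_ring R\<^esub> u"
proof (induction n arbitrary: g)
  interpret UP: principal_domain "poly_ring R"
    by (rule univ_poly_is_principal[OF carrier_is_subfield])
  case (Suc n)
  show ?case
  proof (cases "q pdivides g")
    case True
    then obtain g' where g': "g' \<in> carrier (poly_ring R)" "g = q \<otimes>\<^bsub>poly_ring R\<^esub> g'"
      unfolding pdivides_def by (auto elim: dividesE)
    have "q \<otimes>\<^bsub>poly_ring R\<^esub> g' pdivides q \<otimes>\<^bsub>poly_ring R\<^esub> q [^]\<^bsub>poly_ring R\<^esub> n"
      using Suc.prems g' q(1) by (simp add: UP.m_comm)
    moreover have "q \<noteq> \<zero>\<^bsub>poly_ring R\<^esub>"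
      using pirreducibleE(1)[OF carrier_is_subring q] univ_poly_zero by metis
    ultimately have "g' pdivides q [^]\<^bsub>poly_ring R\<^esub> n"
      using UP.divides_mult_lcancel q(1) g'(1) unfolding pdivides_def by simp
    then obtain k u where "k \<le> n" "u \<in> Units (poly_ring R)"
        "g' = q [^]\<^bsub>poly_ring R\<^esub> k \<otimes>\<^bsub>poly_ring R\<^esub> u"
      using Suc.IH g'(1) by blast
    then have "g = q [^]\<^bsub>poly_ring R\<^esub> Suc k \<otimes>\<^bsub>poly_ring R\<^esub> u"
      using g' q(1) UP.Units_closed[OF \<open>u \<in> Units (poly_ring R)\<close>] by (simp add: UP.m_ac)
    then show ?thesis
      using \<open>k \<le> n\<close> \<open>u \<in> Units (poly_ring R)\<close> by (intro exI[of _ "Suc k"]) auto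
  next
    case False
    then have "g \<in> Units (poly_ring R)"
      using pdivides_pirreducible_pow_imp_unit[OF q Suc.prems] by blast
    moreover have "g = q [^]\<^bsub>poly_ring R\<^esub> (0::nat) \<otimes>\<^bsub>poly_ring R\<^esub> g"
      using Suc.prems(1) by simp
    ultimately show ?thesis
      by blast
  qed
next
  interpret UP: principal_domain "poly_ring R"
    by (rule univ_poly_is_principal[OF carrier_is_subfield])
  case 0
  then obtain b where "b \<in> carrier (poly_ring R)" "g \<otimes>\<^bsub>poly_ring R\<^esub> b = \<one>\<^bsub>poly_ring R\<^esub>"
    unfolding pdivides_def by (auto elim: dividesE)
  then have "g \<in> Units (poly_ring R)"
    using 0 UP.m_comm[of g b] unfolding Units_def by auto
  moreover have "g = q [^]\<^bsub>poly_ring R\<^esub> (0::nat) \<otimes>\<^bsub>poly_ring R\<^esub> g"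
    using 0 by simp
  ultimately show ?case
    by blast
qed

lemma (in field) monic_pdivides_pirreducible_pow:
  assumes q: "q \<in> carrier (poly_ring R)" "pirreducible (carrier R) q" "lead_coeff q = \<one>"
    and g: "g \<in> carrier (poly_ring R)" "lead_coeff g = \<one>" "g pdivides q [^]\<^bsub>poly_ring R\<^esub> (n::nat)"
  shows "\<exists>k\<le>n. g = q [^]\<^bsub>poly_ring R\<^esub> k"
proof -
  interpret UP: domain "poly_ring R"
    by (rule univ_poly_is_domain[OF carrier_is_subring])
  obtain k u where k: "k \<le> n" "u \<in> Units (poly_ring R)" "g = q [^]\<^bsub>poly_ring R\<^esub> k \<otimes>\<^bsub>poly_ring R\<^esub> u"
    using pdivides_pirreducible_pow[OF q(1,2) g(1,3)] by blast
  obtain u0 where u0: "u = [u0]" "u0 \<in> carrier R" "u0 \<noteq> \<zero>"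
    using k(2) univ_poly_units[OF carrier_is_subfield] by auto
  have "q \<noteq> []"
    using pirreducibleE(1)[OF carrier_is_subring q(1,2)] .
  then have "polynomial (carrier R) (q [^]\<^bsub>poly_ring R\<^esub> k)" "q [^]\<^bsub>poly_ring R\<^esub> k \<noteq> []"
    using q(1) polynomial_pow_not_zero[OF q(1)] unfolding univ_poly_carrier by simp_all
  moreover have "polynomial (carrier R) [u0]"
    using u0 by (simp add: polynomial_def)
  ultimately have "lead_coeff g = lead_coeff (q [^]\<^bsub>poly_ring R\<^esub> k) \<otimes> u0"
    using k(3) u0(1) poly_mult_lead_coeff[OF carrier_is_subring] by (simp add: univ_poly_mult)
  then have "u0 = \<one>"
    using lead_coeff_pow[OF q(1) \<open>q \<noteq> []\<close>] q(3) g(2) u0(2) by simp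
  then have "g = q [^]\<^bsub>poly_ring R\<^esub> k"
    using k(3) u0(1) q(1) UP.r_one[of "q [^]\<^bsub>poly_ring R\<^esub> k"] by (simp add: univ_poly_one)
  then show ?thesis
    using k(1) by blast
qed

lemma (in ring) eval_mem_subring:
  assumes "subring F R" and "g \<in> carrier (F[X])" and "a \<in> F"
  shows "eval g a \<in> F"
proof -
  interpret F: ring "R \<lparr> carrier := F \<rparr>"
    by (rule subring_is_ring[OF assms(1)])
  have "set g \<subseteq> F"
    using assms(2) polynomial_incl univ_poly_carrier by metis
  then show ?thesis
    using F.eval_in_carrier[of g a] assms(3) eval_consistent[OF assms(1)] by simp
qed

lemma (in domain) X_pow_plus_const:
  assumes F: "subring F R" and c: "c \<in> F" "c \<noteq> \<zero>"
  shows "X [^]\<^bsub>F[X]\<^esub> (n::nat) \<oplus>\<^bsub>F[X]\<^esub> [c] \<in> carrier (F[X])"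
    and "y \<in> carrier R \<Longrightarrow> eval (X [^]\<^bsub>F[X]\<^esub> (n::nat) \<oplus>\<^bsub>F[X]\<^esub> [c]) y = y [^] n \<oplus> c"
proof -
  interpret FX: ring "F[X]"
    by (rule univ_poly_is_ring[OF F])
  have const: "[c] \<in> carrier (F[X])"
    using c unfolding sym[OF univ_poly_carrier] polynomial_def by simp
  then show "X [^]\<^bsub>F[X]\<^esub> n \<oplus>\<^bsub>F[X]\<^esub> [c] \<in> carrier (F[X])"
    using var_pow_closed[OF F] by (intro FX.a_closed)
  assume y: "y \<in> carrier R"
  interpret ev: ring_hom_ring "F[X]" R "\<lambda>g. eval g y"
    by (rule eval_ring_hom[OF F y])
  show "eval (X [^]\<^bsub>F[X]\<^esub> n \<oplus>\<^bsub>F[X]\<^esub> [c]) y = y [^] n \<oplus> c"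
    using var_closed(1)[OF F] const c subringE(1)[OF F] eval_var[OF y]
    by (simp add: ev.hom_nat_pow subset_iff)
qed

lemma (in field) algebraic_of_pow_mem:
  assumes F: "subfield F R" and x: "x \<in> carrier R" and "x [^] n \<in> F" and "0 < (n::nat)"
  shows "(algebraic over F) x"
proof (cases "x = \<zero>")
  case True
  then show ?thesis
    using zero_is_algebraic[OF subfieldE(1)[OF F]] by simp
next
  case False
  define f where "f = X [^]\<^bsub>F[X]\<^esub> n \<oplus>\<^bsub>F[X]\<^esub> [\<ominus> (x [^] n)]"
  have c: "\<ominus> (x [^] n) \<in> F" "\<ominus> (x [^] n) \<noteq> \<zero>"
    using subringE(5)[OF subfieldE(1)[OF F] \<open>x [^] n \<in> F\<close>] x False nat_pow_nonzero by auto
  note f = X_pow_plus_const[OF subfieldE(1)[OF F] c, where n = n, folded f_def]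
  have "eval f \<zero> \<noteq> \<zero>"
    using f(2)[of \<zero>] c \<open>0 < n\<close> x by (simp add: nat_pow_zero)
  then have "f \<noteq> []"
    by auto
  moreover have "eval f x = \<zero>"
    using f(2)[OF x] x by (simp add: r_neg)
  ultimately show ?thesis
    using algebraicI[OF f(1)] by simp
qed

context char_p_field
begin

lemma poly_ring_char: "add_pow (poly_ring R) p \<one>\<^bsub>poly_ring R\<^esub> = \<zero>\<^bsub>poly_ring R\<^esub>"
proof -
  interpret const: ring_hom_ring R "poly_ring R" poly_of_const
    using canonical_embedding_ring_hom[OF carrier_is_subring] by simp
  have "add_pow (poly_ring R) p (poly_of_const \<one>) = poly_of_const (add_pow R p \<one>)"
    using const.hom_add_pow[of \<one> p] by simp
  then show ?thesis
    using char_p by (simp add: poly_of_const_def univ_poly_one univ_poly_zero)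
qed

lemma Irr_pdivides_pth_power:
  assumes F: "subfield F R" and x: "x \<in> carrier R" "x \<noteq> \<zero>" and "x [^] p \<in> F"
  shows "Irr F x pdivides [\<one>, \<ominus> x] [^]\<^bsub>poly_ring R\<^esub> p"
proof -
  interpret const: ring_hom_ring R "poly_ring R" poly_of_const
    using canonical_embedding_ring_hom[OF carrier_is_subring] by simp
  have alg: "(algebraic over F) x"
    using algebraic_of_pow_mem[OF F x(1) \<open>x [^] p \<in> F\<close>] p_gt_1 by simp
  have "\<ominus> (x [^] p) \<in> F" "\<ominus> (x [^] p) \<noteq> \<zero>"
    using subringE(5)[OF subfieldE(1)[OF F] \<open>x [^] p \<in> F\<close>] x nat_pow_nonzero by auto
  note f = X_pow_plus_const[OF subfieldE(1)[OF F] this, where n = p]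
  have "[\<one>, \<ominus> x] = X \<oplus>\<^bsub>poly_ring R\<^esub> poly_of_const (\<ominus> x)"
    using x by (simp add: univ_poly_add var_def poly_of_const_def)
  then have "[\<one>, \<ominus> x] [^]\<^bsub>poly_ring R\<^esub> p
      = X [^]\<^bsub>poly_ring R\<^esub> p \<oplus>\<^bsub>poly_ring R\<^esub> poly_of_const ((\<ominus> x) [^] p)"
    using cring.freshman_dream[OF univ_poly_is_cring[OF carrier_is_subring] prime_p poly_ring_char]
      var_closed(1)[OF carrier_is_subring] x(1) by (simp add: const.hom_nat_pow)
  also have "\<dots> = X [^]\<^bsub>F[X]\<^esub> p \<oplus>\<^bsub>F[X]\<^esub> [\<ominus> (x [^] p)]"
    using frobenius_uminus[OF x(1)] \<open>\<ominus> (x [^] p) \<noteq> \<zero>\<close>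
      unitary_monom_eq_var_pow[OF carrier_is_subring] unitary_monom_eq_var_pow[OF subfieldE(1)[OF F]]
    by (simp add: univ_poly_add poly_of_const_def)
  finally show ?thesis
    using Irr_minimal[OF F x(1) alg f(1)] f(2)[OF x(1)] x(1) by (simp add: r_neg)
qed

lemma Irr_pth_root_eq_pow:
  assumes F: "subfield F R" and x: "x \<in> carrier R" "x \<noteq> \<zero>" and "x [^] p \<in> F"
  shows "\<exists>k\<le>p. Irr F x = [\<one>, \<ominus> x] [^]\<^bsub>poly_ring R\<^esub> k"
proof -
  have alg: "(algebraic over F) x"
    using algebraic_of_pow_mem[OF F x(1) \<open>x [^] p \<in> F\<close>] p_gt_1 by simp
  have q: "[\<one>, \<ominus> x] \<in> carrier (poly_ring R)" "degree [\<one>, \<ominus> x] = 1"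
    using x unfolding sym[OF univ_poly_carrier] polynomial_def by auto
  have "Irr F x \<in> carrier (poly_ring R)"
    using IrrE(1)[OF F x(1) alg] carrier_polynomial[OF subfieldE(1)[OF F]] univ_poly_carrier by metis
  then show ?thesis
    using monic_pdivides_pirreducible_pow[OF q(1) degree_one_imp_pirreducible[OF carrier_is_subfield q]]
      IrrE(3)[OF F x(1) alg] Irr_pdivides_pth_power[OF assms] by simp
qed

lemma degree_Irr_pth_root:
  assumes F: "subfield F R" and x: "x \<in> carrier R" and "x [^] p \<in> F" and "x \<notin> F"
  shows "degree (Irr F x) = p"
proof -
  have "x \<noteq> \<zero>"
    using \<open>x \<notin> F\<close> subringE(2)[OF subfieldE(1)[OF F]] by auto
  then obtain k where "k \<le> p" and Irr: "Irr F x = [\<one>, \<ominus> x] [^]\<^bsub>poly_ring R\<^esub> k"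
    using Irr_pth_root_eq_pow[OF F x _ \<open>x [^] p \<in> F\<close>] by blast
  have q: "[\<one>, \<ominus> x] \<in> carrier (poly_ring R)"
    using x unfolding sym[OF univ_poly_carrier] polynomial_def by auto
  have alg: "(algebraic over F) x"
    using algebraic_of_pow_mem[OF F x \<open>x [^] p \<in> F\<close>] p_gt_1 by simp
  interpret ev_zero: ring_hom_ring "poly_ring R" R "\<lambda>g. eval g \<zero>"
    by (rule eval_ring_hom[OF carrier_is_subring zero_closed])
  have "k \<noteq> 0"
  proof
    assume "k = 0"
    then have "eval (Irr F x) x = \<one>"
      unfolding Irr by (simp add: univ_poly_one)
    then show False
      using IrrE(4)[OF F x alg] by simp
  qed
  moreover have "\<not> k < p"
  proof
    assume "k < p"
    have "eval (Irr F x) \<zero> = (\<ominus> x) [^] k"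
      unfolding Irr using ev_zero.hom_nat_pow[OF q] x by simp
    moreover have "eval (Irr F x) \<zero> \<in> F"
      using eval_mem_subring[OF subfieldE(1)[OF F] IrrE(1)[OF F x alg] subringE(2)[OF subfieldE(1)[OF F]]] .
    moreover have "(\<ominus> x) [^] p \<in> F"
      using frobenius_uminus[OF x] subringE(5)[OF subfieldE(1)[OF F] \<open>x [^] p \<in> F\<close>] by simp
    moreover have "coprime k p"
      using \<open>k < p\<close> \<open>k \<noteq> 0\<close> prime_imp_coprime[OF prime_p, of k]
      by (metis coprime_commute dvd_imp_le linorder_not_le neq0_conv)
    ultimately have "\<ominus> x \<in> F"
      using mem_subfield_of_coprime_pows[OF F, of "\<ominus> x" k p] x \<open>k \<noteq> 0\<close> by simp
    then show False
      using \<open>x \<notin> F\<close> subringE(5)[OF subfieldE(1)[OF F], of "\<ominus> x"] x by simp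
  qed
  ultimately have "k = p"
    using \<open>k \<le> p\<close> by simp
  then show ?thesis
    using polynomial_pow_degree[OF q] unfolding Irr by simp
qed

lemma finite_dimension_over_frob_image:
  assumes "fin_gen_ext R F" and "F \<subseteq> frob_image R p"
  shows "finite_dimension (frob_image R p) (carrier R)"
proof -
  define C where "C = frob_image R p"
  have C: "subfield C R"
    unfolding C_def by (rule subfield_frob_image)
  obtain S where S: "finite S" "S \<subseteq> carrier R" "generate_field R (F \<union> S) = carrier R"
    using assms(1) unfolding fin_gen_ext_def by blast
  obtain ss where ss: "set ss = S"
    using finite_list[OF S(1)] by blast
  have "(algebraic over C) s" if "s \<in> set ss" for s
    using algebraic_of_pow_mem[OF C, of s p] that ss S(2) p_gt_1 unfolding C_def frob_image_def by auto
  then have E: "subfield (finite_extension C ss) R" "finite_dimension C (finite_extension C ss)"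
    using finite_extension_is_subfield[OF C] finite_extension_finite_dimension(1)[OF C] ss S(2) by auto
  have "F \<subseteq> finite_extension C ss"
    using assms(2) finite_extension_incl[OF subfieldE(3)[OF C], of ss] ss S(2) unfolding C_def by auto
  moreover have "S \<subseteq> finite_extension C ss"
    using finite_extension_mem[OF subfieldE(1)[OF C], of ss] ss S(2) by auto
  ultimately have "F \<union> S \<subseteq> finite_extension C ss"
    by simp
  then have "generate_field R (F \<union> S) \<subseteq> finite_extension C ss"
    using generate_field_min_subfield1[OF _ E(1)] subfieldE(3)[OF E(1)] by blast
  then have "finite_extension C ss = carrier R"
    using S(3) subfieldE(3)[OF E(1)] by simp
  then show ?thesis
    using E(2) unfolding C_def by simp
qed

end

section \<open>p-bases\<close>

(* Together with z^p in F for every entry, this is p-independence of the list over F. *)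
fun p_independent :: "('a, 'b) ring_scheme \<Rightarrow> 'a set \<Rightarrow> 'a list \<Rightarrow> bool" where
  "p_independent R F [] = True"
| "p_independent R F (z # zs) \<longleftrightarrow> z \<notin> ring.finite_extension R F zs \<and> p_independent R F zs"

lemma (in ring) p_independent_antimono:
  "A \<subseteq> C \<Longrightarrow> p_independent R C zs \<Longrightarrow> p_independent R A zs"
  using mono_finite_extension[of A C] by (induction zs) (auto simp del: finite_extension.simps)

context char_p_field
begin

lemma dimension_p_independent:
  assumes F: "subfield F R" and "set zs \<subseteq> carrier R" and "\<forall>z\<in>set zs. z [^] p \<in> F"
    and "p_independent R F zs"
  shows "subfield (finite_extension F zs) R" and "dimension (p ^ length zs) F (finite_extension F zs)"
proof -
  have "subfield (finite_extension F zs) R \<and> dimension (p ^ length zs) F (finite_extension F zs)"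
    using assms(2-4)
  proof (induction zs)
    case Nil
    then show ?case
      using F dimension_one[OF F] by simp
  next
    case (Cons z zs)
    define E where "E = finite_extension F zs"
    have E: "subfield E R" "dimension (p ^ length zs) F E"
      using Cons unfolding E_def by auto
    have z: "z \<in> carrier R" "z \<notin> E"
      using Cons.prems unfolding E_def by auto
    have "F \<subseteq> E"
      using finite_extension_incl[OF subfieldE(3)[OF F]] Cons.prems(1) unfolding E_def by simp
    then have "z [^] p \<in> E"
      using Cons.prems(2) by auto
    then have "(algebraic over E) z" and "dimension p E (simple_extension E z)"
      using algebraic_of_pow_mem[OF E(1) z(1)] p_gt_1 dimension_simple_extension[OF E(1) z(1)]
        degree_Irr_pth_root[OF E(1) z(1) _ z(2)] by auto
    then have "subfield (simple_extension E z) R"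
        and "dimension (p ^ length zs * p) F (simple_extension E z)"
      using simple_extension_is_subfield[OF E(1) z(1)] telescopic_base[OF F E] by auto
    then show ?case
      unfolding E_def by (simp add: mult.commute)
  qed
  then show "subfield (finite_extension F zs) R" "dimension (p ^ length zs) F (finite_extension F zs)"
    by blast+
qed

lemma p_independent_length_bound:
  assumes C: "subfield C R" and B: "subfield B R" and "C \<subseteq> B" and "dimension m C B"
    and "set zs \<subseteq> B" and "\<forall>z\<in>set zs. z [^] p \<in> C" and "p_independent R C zs"
  shows "p ^ length zs \<le> m"
proof -
  have "set zs \<subseteq> carrier R"
    using \<open>set zs \<subseteq> B\<close> subfieldE(3)[OF B] by auto
  then have "dimension (p ^ length zs) C (finite_extension C zs)"
    using dimension_p_independent(2)[OF C _ assms(6,7)] by blast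
  then obtain Vs where Vs: "set Vs \<subseteq> carrier R" "independent C Vs" "length Vs = p ^ length zs"
      "Span C Vs = finite_extension C zs"
    using exists_base[OF C] by blast
  have "finite_extension C zs \<subseteq> B"
    using finite_extension_subring_incl[OF subfieldE(1)[OF B] \<open>C \<subseteq> B\<close> \<open>set zs \<subseteq> B\<close>] .
  then have "set Vs \<subseteq> B"
    using Span_base_incl[OF C Vs(1)] Vs(4) by auto
  then show ?thesis
    using independent_length_le_dimension[OF C \<open>dimension m C B\<close> Vs(2)] Vs(3) by simp
qed

lemma exists_p_basis:
  assumes C: "subfield C R" and B: "subfield B R" and "C \<subseteq> B" and "finite_dimension C B"
    and pth_powers: "\<forall>b\<in>B. b [^] p \<in> C"
  shows "\<exists>zs. set zs \<subseteq> B \<and> p_independent R C zs \<and> finite_extension C zs = B"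
proof (rule ccontr)
  assume no_basis: "\<not> ?thesis"
  obtain m where "dimension m C B"
    using \<open>finite_dimension C B\<close> by auto
  have "\<exists>zs. set zs \<subseteq> B \<and> p_independent R C zs \<and> length zs = k" for k
  proof (induction k)
    case 0
    show ?case
      by simp
  next
    case (Suc k)
    then obtain zs where zs: "set zs \<subseteq> B" "p_independent R C zs" "length zs = k"
      by blast
    have "finite_extension C zs \<subseteq> B"
      using finite_extension_subring_incl[OF subfieldE(1)[OF B] \<open>C \<subseteq> B\<close> zs(1)] .
    moreover have "finite_extension C zs \<noteq> B"
      using no_basis zs by blast
    ultimately obtain z where "z \<in> B" "z \<notin> finite_extension C zs"
      by blast
    then show ?case
      using zs by (intro exI[of _ "z # zs"]) simp
  qed
  then obtain zs where "set zs \<subseteq> B" "p_independent R C zs" "length zs = m"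
    by blast
  then have "p ^ m \<le> m"
    using p_independent_length_bound[OF C B \<open>C \<subseteq> B\<close> \<open>dimension m C B\<close>] pth_powers by auto
  moreover have "m < 2 ^ m" "2 ^ m \<le> p ^ m"
    using p_gt_1 by (simp_all add: power_mono)
  ultimately show False
    by linarith
qed

end

section \<open>Descending a p-basis along the Frobenius\<close>

lemma (in ring) subring_subalgebra:
  assumes "subring V R" and "K \<subseteq> V"
  shows "subalgebra K V R"
  using assms subringE(6)[OF assms(1)] subring.axioms(1)[OF assms(1)]
  unfolding subalgebra_def subalgebra_axioms_def by (auto simp: subgroup_def)

lemma (in field) generate_field_finite_extension_Un:
  assumes A: "subfield A R" and C: "subfield C R" and "A \<subseteq> C" and zs: "set zs \<subseteq> carrier R"
    and W: "subfield (finite_extension C zs) R"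
  shows "generate_field R (finite_extension A zs \<union> C) = finite_extension C zs"
proof -
  have NC: "finite_extension A zs \<union> C \<subseteq> carrier R"
    using finite_extension_in_carrier[OF subfieldE(3)[OF A] zs] subfieldE(3)[OF C] by blast
  have "set zs \<subseteq> finite_extension A zs"
    using finite_extension_mem[OF subfieldE(1)[OF A] zs] .
  then have "finite_extension C zs \<subseteq> generate_field R (finite_extension A zs \<union> C)"
    using finite_extension_subring_incl[OF subfieldE(1)[OF generate_field_is_subfield[OF NC]]]
      generate_fieldE(2)[OF NC refl] by blast
  moreover have "finite_extension A zs \<union> C \<subseteq> finite_extension C zs"
    using mono_finite_extension[OF \<open>A \<subseteq> C\<close>] finite_extension_incl[OF subfieldE(3)[OF C] zs] by blast
  then have "generate_field R (finite_extension A zs \<union> C) \<subseteq> finite_extension C zs"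
    using generate_field_min_subfield1[OF NC W] by blast
  ultimately show ?thesis
    by blast
qed

lemma (in ring) finite_dimension_mono_subfield:
  assumes A: "subfield A R" and C: "subfield C R" and "A \<subseteq> C"
    and "finite_dimension A E" and "subalgebra C E R"
  shows "finite_dimension C E"
proof -
  obtain n where "dimension n A E"
    using \<open>finite_dimension A E\<close> by auto
  then obtain Us where Us: "set Us \<subseteq> carrier R" "Span A Us = E"
    using exists_base[OF A] by blast
  have "Span A Us \<subseteq> Span C Us"
    using \<open>A \<subseteq> C\<close> unfolding Span_eq_combine_set[OF A Us(1)] Span_eq_combine_set[OF C Us(1)] by blast
  moreover have "Span C Us \<subseteq> E"
    using Span_base_incl[OF A Us(1)] Us(2) subalgebra_Span_incl[OF C \<open>subalgebra C E R\<close>] by simp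
  ultimately show ?thesis
    using Span_finite_dimension[OF C Us(1)] Us(2) by simp
qed

context char_p_field
begin

lemma p_basis_base_change:
  assumes A: "subfield A R" and C: "subfield C R" and "A \<subseteq> C" and "dimension n A C"
    and zs: "set zs \<subseteq> carrier R" "\<forall>z\<in>set zs. z [^] p \<in> A" "p_independent R C zs"
  shows "subfield (finite_extension A zs) R"
    and "A \<subseteq> finite_extension A zs"
    and "finite_extension A zs \<subseteq> finite_extension C zs"
    and "dimension n (finite_extension A zs) (finite_extension C zs)"
    and "generate_field R (finite_extension A zs \<union> C) = finite_extension C zs"
proof -
  define N where "N = finite_extension A zs"
  define W where "W = finite_extension C zs"
  have "\<forall>z\<in>set zs. z [^] p \<in> C"
    using zs(2) \<open>A \<subseteq> C\<close> by blast
  note W = dimension_p_independent[OF C zs(1) this zs(3), folded W_def]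
  note N = dimension_p_independent[OF A zs(1,2) p_independent_antimono[OF \<open>A \<subseteq> C\<close> zs(3)],
      folded N_def]
  show "subfield (finite_extension A zs) R"
    using N(1) unfolding N_def .
  show "A \<subseteq> finite_extension A zs"
    using finite_extension_incl[OF subfieldE(3)[OF A] zs(1)] .
  then have "A \<subseteq> N"
    unfolding N_def .
  show "finite_extension A zs \<subseteq> finite_extension C zs"
    using mono_finite_extension[OF \<open>A \<subseteq> C\<close>] .
  then have "N \<subseteq> W"
    unfolding N_def W_def .
  have AW: "dimension (n * p ^ length zs) A W"
    using telescopic_base[OF A C \<open>dimension n A C\<close> W(2)] .
  have "finite_dimension N W"
    using finite_dimension_mono_subfield[OF A N(1) \<open>A \<subseteq> N\<close> finite_dimensionI[OF AW]
        subring_subalgebra[OF subfieldE(1)[OF W(1)] \<open>N \<subseteq> W\<close>]] .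
  then obtain m where m: "dimension m N W"
    by auto
  have "n * p ^ length zs = p ^ length zs * m"
    using dimension_is_inj[OF A AW telescopic_base[OF A N(1) N(2) m]] .
  then show "dimension n (finite_extension A zs) (finite_extension C zs)"
    using m p_gt_1 unfolding N_def W_def by simp
  show "generate_field R (finite_extension A zs \<union> C) = finite_extension C zs"
    using generate_field_finite_extension_Un[OF A C \<open>A \<subseteq> C\<close> zs(1) W(1)[unfolded W_def]] .
qed

end

theorem mainTheorem12:
  fixes R :: "('a, 'b) ring_scheme" (structure)
    and p :: nat and W1 :: "'a set"
  assumes "field R"
    and "ring_char R = p" and "p > 0"
    and "fin_gen_ext R (perfect_core R p)"
    and "subfield W1 R"
    and "frob_image R p \<subseteq> W1" and "W1 \<noteq> carrier R"
  shows "\<exists>W2. subfield W2 R \<and> W2 \<subseteq> W1 \<and>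
           frob_image R (p ^ 2) \<subseteq> W2 \<and>
           compositum R W2 (frob_image R p) = W1 \<and>
           (\<exists>n. ring.dimension R n W2 W1 \<and> ring.dimension R n W1 (carrier R))"
proof -
  interpret field R
    by (rule assms(1))
  interpret char_p_field R p
    using prime_ring_char[OF assms(2,3)] ring_char_posD(1)[OF assms(2,3)] by unfold_locales
  let ?C = "frob_image R p" and ?A = "(\<lambda>x. x [^] p) ` W1"
  have W1: "subfield W1 R" "W1 \<subseteq> carrier R" "?C \<subseteq> W1"
    using assms(5,6) subfieldE(3) by auto
  have C: "subfield ?C R" and A: "subfield ?A R" and "?A \<subseteq> ?C"
    using subfield_frob_image subfield_frobenius_image[OF W1(1)] W1(2) unfolding frob_image_def by auto
  have "perfect_core R p \<subseteq> ?C"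
    unfolding perfect_core_def using INT_lower[of 1 UNIV "\<lambda>n. frob_image R (p ^ n)"] by simp
  then have K_over_C: "finite_dimension ?C (carrier R)"
    using finite_dimension_over_frob_image[OF assms(4)] by blast
  then obtain n where n: "dimension n W1 (carrier R)"
    using finite_dimension_mono_subfield[OF C W1(1,3) _ carrier_is_subalgebra[OF W1(2)]] by auto
  obtain zs where zs: "set zs \<subseteq> W1" "p_independent R ?C zs" "finite_extension ?C zs = W1"
    using exists_p_basis[OF C W1(1,3)] K_over_C W1 subalbegra_incl_imp_finite_dimension[OF C]
      subring_subalgebra[OF subfieldE(1)] unfolding frob_image_def by blast
  then have "set zs \<subseteq> carrier R" "\<forall>z\<in>set zs. z [^] p \<in> ?A"
    using W1(2) by auto
  note W2 = p_basis_base_change[OF A C \<open>?A \<subseteq> ?C\<close>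
      dimension_frobenius_image[OF W1(1) n, folded frob_image_def] this zs(2), unfolded zs(3)]
  show ?thesis
    using W2 n frob_image_mult_subset[OF W1(3), of p] unfolding compositum_def power2_eq_square
    by blast
qed

end
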